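(* Let $f:\mathbb{R}^d\to\mathbb{R}$ be differentiable with $L$-Lipschitz gradient and $c$-strongly convex, with minimizer $\vec x^*$. Consider parallel-step SGD iterations with $p$ processors (as defined in the context) with constant learning rate $\alpha\le\frac{1}{4L}$ satisfying elastic consistency with constant $B$. Then for every $t\ge0$, $$\mathbb{E}\|\vec x_{t+1}-\vec x^*\|^2\le\Big(1-\frac{\alpha c}{4}\Big)\mathbb{E}\|\vec x_t-\vec x^*\|^2+\frac{2\alpha^3L^2B^2}{c}+\frac{2\alpha^2\sigma^2}{p}+4L^2\alpha^4B^2.$$
   Context: $c$-strong convexity ($c>0$) means $(\vec x-\vec y)^\top(\nabla f(\vec x)-\nabla f(\vec y))\ge c\|\vec x-\vec y\|^2$ for all $\vec x,\vec y$. All random objects live on a probability space with a filtration $(\mathcal F_t)_{t\ge0}$. Parallel-step SGD iterations with $p$ processors: $\vec x_0\in\mathbb{R}^d$ is deterministic. For each $t\ge0$ a set $I_t\subseteq\{1,\dots,p\}$ with $p/2\le|I_t|\le p$ is given (fixed independently of the algorithm's randomness). Each $i\in I_t$ holds a view $\vec v_t^i$; $\vec x_t$ and all $\vec v_t^i$ are $\mathcal F_t$-measurable. Each $i\in I_t$ computes an $\mathcal F_{t+1}$-measurable stochastic gradient $\tilde G(\vec v_t^i)$; conditionally on $\mathcal F_t$ these are independent across $i\in I_t$, with $\mathbb{E}[\tilde G(\vec v_t^i)\mid\mathcal F_t]=\nabla f(\vec v_t^i)$ and $\mathbb{E}[\|\tilde G(\vec v_t^i)-\nabla f(\vec v_t^i)\|^2\mid\mathcal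 F_t]\le\sigma^2$. Update: $\vec x_{t+1}=\vec x_t-\frac{\alpha}{p}\sum_{i\in I_t}\tilde G(\vec v_t^i)$. Elastic consistency with constant $B>0$: $\mathbb{E}\|\vec x_t-\vec v_t^i\|^2\le\alpha^2B^2$ for all $t$ and all $i\in I_t$. *)

theory Defs
  imports "HOL-Probability.Probability"
begin

definition cond_indep_vars ::
  "'a measure \<Rightarrow> 'a measure \<Rightarrow> ('i \<Rightarrow> 'a \<Rightarrow> 'b::topological_space) \<Rightarrow> 'i set \<Rightarrow> bool" where
  "cond_indep_vars M F X I \<longleftrightarrow>
     (\<forall>J A. J \<subseteq> I \<longrightarrow> finite J \<longrightarrow> (\<forall>i\<in>J. A i \<in> sets borel) \<longrightarrow>
        (AE \<omega> in M. real_cond_exp M F (\<lambda>\<omega>'. \<Prod>i\<in>J. indicator (A i) (X i \<omega>')) \<omega>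
                   = (\<Prod>i\<in>J. real_cond_exp M F (\<lambda>\<omega>'. indicator (A i) (X i \<omega>')) \<omega>)))"

end

theory Submission
  imports Defs
begin

text \<open>
  One step splits as \<open>x\<^sub>t\<^sub>+\<^sub>1 - x\<^sup>* = Y - (\<alpha>/p) \<Sum>\<^sub>i n\<^sub>i\<close>, with the \<open>F\<^sub>t\<close>-measurable drift
  \<open>Y = x\<^sub>t - x\<^sup>* - (\<alpha>/p) \<Sum>\<^sub>i \<nabla>f(v\<^sub>t\<^sup>i)\<close> and the gradient noise \<open>n\<^sub>i = G(v\<^sub>t\<^sup>i) - \<nabla>f(v\<^sub>t\<^sup>i)\<close>.
  The noise has conditional mean zero, so it is orthogonal to \<open>Y\<close> in \<open>L\<^sup>2\<close>, and conditional
  independence makes the \<open>n\<^sub>i\<close> pairwise orthogonal; hence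
  \<open>E|x\<^sub>t\<^sub>+\<^sub>1 - x\<^sup>*|\<^sup>2 = E|Y|\<^sup>2 + (\<alpha>/p)\<^sup>2 \<Sum>\<^sub>i E|n\<^sub>i|\<^sup>2 \<le> E|Y|\<^sup>2 + \<alpha>\<^sup>2\<sigma>\<^sup>2/p\<close>.

  The drift is a deterministic inexact gradient step. Strong convexity and
  \<open>|\<nabla>f(x)|\<^sup>2 \<le> 2L \<langle>x - x\<^sup>*, \<nabla>f(x)\<rangle>\<close> (the descent lemma at \<open>x - \<nabla>f(x)/L\<close> compared with
  convexity at \<open>x\<^sup>*\<close>) contract \<open>|x\<^sub>t - x\<^sup>*|\<^sup>2\<close> by the factor \<open>1 - \<alpha>c/4\<close>, while the error
  caused by the stale views \<open>v\<^sub>t\<^sup>i\<close> is controlled by the Lipschitz bound and elastic consistency.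
\<close>

section \<open>Smooth strongly convex functions\<close>

lemma has_real_derivative_along_line:
  fixes f :: "'v::real_inner \<Rightarrow> real"
  assumes "\<And>y. GDERIV f y :> gradf y"
  shows "((\<lambda>s. f (y + s *\<^sub>R u)) has_real_derivative gradf (y + s *\<^sub>R u) \<bullet> u) (at s)"
proof -
  have "((\<lambda>s. y + s *\<^sub>R u) has_derivative (\<lambda>h. h *\<^sub>R u)) (at s)"
    by (auto intro!: derivative_eq_intros)
  from has_derivative_compose[OF this assms[of "y + s *\<^sub>R u", unfolded gderiv_def]]
  show ?thesis
    by (simp add: has_field_derivative_def mult_commute_abs inner_commute)
qed

lemma lipschitz_gradient_upper_bound:
  fixes f :: "'v::real_inner \<Rightarrow> real"
  assumes grad: "\<And>y. GDERIV f y :> gradf y" and lip: "L-lipschitz_on UNIV gradf"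
  shows "f (y + u) \<le> f y + gradf y \<bullet> u + L / 2 * (norm u)\<^sup>2"
proof -
  define g where "g s = f (y + s *\<^sub>R u) - s * (gradf y \<bullet> u) - L / 2 * s\<^sup>2 * (norm u)\<^sup>2" for s
  have "g 1 \<le> g 0"
  proof (rule DERIV_nonpos_imp_nonincreasing[of 0 1 g])
    fix s :: real assume s: "0 \<le> s" "s \<le> 1"
    define g' where "g' = (gradf (y + s *\<^sub>R u) - gradf y) \<bullet> u - L * s * (norm u)\<^sup>2"
    have "(g has_real_derivative g') (at s)"
      unfolding g_def g'_def inner_diff_left
      by (rule has_real_derivative_along_line[OF grad] derivative_eq_intros refl | simp)+
    moreover have "(gradf (y + s *\<^sub>R u) - gradf y) \<bullet> u \<le> L * s * (norm u)\<^sup>2"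
    proof -
      have "(gradf (y + s *\<^sub>R u) - gradf y) \<bullet> u \<le> norm (gradf (y + s *\<^sub>R u) - gradf y) * norm u"
        by (rule norm_cauchy_schwarz)
      also have "\<dots> \<le> L * norm (s *\<^sub>R u) * norm u"
        using lipschitz_onD[OF lip, of "y + s *\<^sub>R u" y] by (intro mult_right_mono) (auto simp: dist_norm)
      finally show ?thesis using s by (simp add: power2_eq_square mult.assoc)
    qed
    ultimately show "\<exists>d. (g has_real_derivative d) (at s) \<and> d \<le> 0"
      unfolding g'_def by auto
  qed simp
  then show ?thesis unfolding g_def by simp
qed

lemma monotone_gradient_lower_bound:
  fixes f :: "'v::real_inner \<Rightarrow> real"
  assumes grad: "\<And>y. GDERIV f y :> gradf y"
    and mono: "\<And>y z. (y - z) \<bullet> (gradf y - gradf z) \<ge> 0"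
  shows "f y + gradf y \<bullet> (z - y) \<le> f z"
proof -
  define u where "u = z - y"
  define g where "g s = f (y + s *\<^sub>R u) - s * (gradf y \<bullet> u)" for s
  have "g 0 \<le> g 1"
  proof (rule DERIV_nonneg_imp_nondecreasing[of 0 1 g])
    fix s :: real assume s: "0 \<le> s" "s \<le> 1"
    define g' where "g' = (gradf (y + s *\<^sub>R u) - gradf y) \<bullet> u"
    have "(g has_real_derivative g') (at s)"
      unfolding g_def g'_def inner_diff_left
      by (rule has_real_derivative_along_line[OF grad] derivative_eq_intros refl | simp)+
    moreover have "0 \<le> s * g'"
      using mono[of "y + s *\<^sub>R u" y] by (simp add: g'_def inner_commute)
    then have "s = 0 \<or> 0 \<le> g'"
      using s by (auto simp: zero_le_mult_iff)
    then have "0 \<le> g'"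
      by (auto simp: g'_def)
    ultimately show "\<exists>d. (g has_real_derivative d) (at s) \<and> d \<ge> 0"
      by blast
  qed simp
  then show ?thesis unfolding g_def u_def by (simp add: inner_commute)
qed

lemma gradient_norm_sq_le_inner:
  fixes f :: "'v::real_inner \<Rightarrow> real"
  assumes grad: "\<And>y. GDERIV f y :> gradf y" and lip: "L-lipschitz_on UNIV gradf" and L: "L > 0"
    and mono: "\<And>y z. (y - z) \<bullet> (gradf y - gradf z) \<ge> 0"
    and minimizer: "\<And>y. f xstar \<le> f y"
  shows "(norm (gradf x))\<^sup>2 \<le> 2 * L * ((x - xstar) \<bullet> gradf x)"
proof -
  define h where "h = gradf x"
  have "f xstar \<le> f (x + (- 1 / L) *\<^sub>R h)"
    by (rule minimizer)
  also have "\<dots> \<le> f x + h \<bullet> ((- 1 / L) *\<^sub>R h) + L / 2 * (norm ((- 1 / L) *\<^sub>R h))\<^sup>2"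
    unfolding h_def by (rule lipschitz_gradient_upper_bound[OF grad lip])
  also have "\<dots> = f x - (norm h)\<^sup>2 / (2 * L)"
    using L by (simp add: power2_norm_eq_inner[symmetric] power2_eq_square field_simps)
  finally have "(norm h)\<^sup>2 / (2 * L) \<le> f x - f xstar" by simp
  also have "\<dots> \<le> h \<bullet> (x - xstar)"
    using monotone_gradient_lower_bound[OF grad mono, of x xstar]
    by (simp add: h_def inner_diff_right)
  finally show ?thesis
    using L by (simp add: h_def field_simps inner_commute)
qed

lemma strong_monotonicity_le_lipschitz:
  fixes gradf :: "'v::euclidean_space \<Rightarrow> 'v"
  assumes lip: "L-lipschitz_on UNIV gradf"
    and strong: "\<And>y z. (y - z) \<bullet> (gradf y - gradf z) \<ge> c * (norm (y - z))\<^sup>2"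
  shows "c \<le> L"
proof -
  obtain b :: 'v where b: "b \<in> Basis"
    using nonempty_Basis by blast
  have "c * (norm b)\<^sup>2 \<le> b \<bullet> (gradf b - gradf 0)"
    using strong[of b 0] by simp
  also have "\<dots> \<le> norm b * norm (gradf b - gradf 0)"
    by (rule norm_cauchy_schwarz)
  also have "\<dots> \<le> norm b * (L * norm b)"
    using lipschitz_onD[OF lip, of b 0] by (intro mult_left_mono) (auto simp: dist_norm)
  finally show ?thesis
    using b by (simp add: power2_eq_square)
qed

lemma norm_sum_squared_le:
  fixes w :: "'i \<Rightarrow> 'v::real_normed_vector"
  shows "(norm (\<Sum>i\<in>I. w i))\<^sup>2 \<le> real (card I) * (\<Sum>i\<in>I. (norm (w i))\<^sup>2)"
proof -
  have "(norm (\<Sum>i\<in>I. w i))\<^sup>2 \<le> (\<Sum>i\<in>I. norm (w i))\<^sup>2"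
    by (rule power_mono[OF norm_sum]) simp
  also have "\<dots> \<le> (\<Sum>i\<in>I. (norm (w i))\<^sup>2) * real (card I)"
    by (rule sum_squared_le_sum_of_squares)
  finally show ?thesis by (simp add: mult.commute)
qed

lemma norm_add_squared_le:
  fixes u w :: "'v::real_normed_vector"
  shows "(norm (u + w))\<^sup>2 \<le> 2 * (norm u)\<^sup>2 + 2 * (norm w)\<^sup>2"
  using norm_sum_squared_le[of "\<lambda>b. if b then u else w" UNIV] by (simp add: UNIV_bool add.commute)

lemma norm_diff_scaleR_squared:
  fixes d w :: "'v::real_inner"
  shows "(norm (d - a *\<^sub>R w))\<^sup>2 = (norm d)\<^sup>2 - 2 * a * (d \<bullet> w) + a\<^sup>2 * (norm w)\<^sup>2"
  by (simp add: power2_norm_eq_inner inner_diff_left inner_diff_right inner_commute algebra_simps)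
    (simp add: power2_eq_square)

lemma inner_le_young:
  fixes d e :: "'v::real_inner"
  assumes "c > 0"
  shows "2 * (d \<bullet> e) \<le> c * (norm d)\<^sup>2 + (norm e)\<^sup>2 / c"
proof -
  have "0 \<le> c * (norm d - norm e / c)\<^sup>2"
    using assms by simp
  also have "\<dots> = c * (norm d)\<^sup>2 + (norm e)\<^sup>2 / c - 2 * norm d * norm e"
    using assms by (simp add: power2_eq_square field_simps)
  finally show ?thesis
    using norm_cauchy_schwarz[of d e] by simp
qed

lemma inexact_gradient_step_le:
  fixes d h e :: "'v::real_inner"
  assumes c: "c > 0" and \<alpha>: "\<alpha> > 0" "4 * \<alpha> * L \<le> 1" and a: "1 / 2 \<le> a" "a \<le> 1"
    and cocoercive: "(norm h)\<^sup>2 \<le> 2 * L * (d \<bullet> h)"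
    and strong: "c * (norm d)\<^sup>2 \<le> d \<bullet> h"
  shows "(norm (d - \<alpha> *\<^sub>R (a *\<^sub>R h + e)))\<^sup>2
    \<le> (1 - \<alpha> * c / 4) * (norm d)\<^sup>2 + (2 * \<alpha> / c + 2 * \<alpha>\<^sup>2) * (norm e)\<^sup>2"
proof -
  have "(norm (d - \<alpha> *\<^sub>R (a *\<^sub>R h + e)))\<^sup>2
      = (norm d)\<^sup>2 - 2 * \<alpha> * a * (d \<bullet> h) - 2 * \<alpha> * (d \<bullet> e) + \<alpha>\<^sup>2 * (norm (a *\<^sub>R h + e))\<^sup>2"
    unfolding norm_diff_scaleR_squared by (simp add: inner_add_right algebra_simps)
  moreover have "\<alpha>\<^sup>2 * (norm (a *\<^sub>R h + e))\<^sup>2 \<le> \<alpha>\<^sup>2 * (2 * a\<^sup>2 * (norm h)\<^sup>2 + 2 * (norm e)\<^sup>2)"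
    using norm_add_squared_le[of "a *\<^sub>R h" e]
    by (intro mult_left_mono) (auto simp: power_mult_distrib)
  moreover have "\<alpha>\<^sup>2 * (2 * a\<^sup>2 * (norm h)\<^sup>2) \<le> \<alpha> * a\<^sup>2 * (d \<bullet> h)"
  proof -
    have "\<alpha>\<^sup>2 * (2 * a\<^sup>2 * (norm h)\<^sup>2) \<le> \<alpha>\<^sup>2 * (2 * a\<^sup>2 * (2 * L * (d \<bullet> h)))"
      using cocoercive by (intro mult_left_mono) auto
    also have "\<dots> = (4 * \<alpha> * L) * (\<alpha> * a\<^sup>2 * (d \<bullet> h))"
      by (simp add: power2_eq_square)
    also have "\<dots> \<le> \<alpha> * a\<^sup>2 * (d \<bullet> h)"
      using mult_right_mono[OF \<alpha>(2), of "\<alpha> * a\<^sup>2 * (d \<bullet> h)"] \<alpha> c order_trans[OF _ strong, of 0]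
      by simp
    finally show ?thesis .
  qed
  moreover have "- 2 * \<alpha> * (d \<bullet> e) \<le> \<alpha> * (c / 2 * (norm d)\<^sup>2 + 2 / c * (norm e)\<^sup>2)"
  proof -
    have "- 2 * (d \<bullet> e) \<le> c / 2 * (norm d)\<^sup>2 + 2 / c * (norm e)\<^sup>2"
      using inner_le_young[of "c / 2" d "- e"] c by simp
    from mult_left_mono[OF this, of \<alpha>] \<alpha> show ?thesis
      by (simp add: algebra_simps)
  qed
  moreover have "\<alpha> * (3 / 4) * (c * (norm d)\<^sup>2) \<le> \<alpha> * (2 * a - a\<^sup>2) * (d \<bullet> h)"
  proof -
    have "(1 - a)\<^sup>2 \<le> (1 / 2)\<^sup>2"
      using a by (intro power_mono) auto
    then have "3 / 4 \<le> 2 * a - a\<^sup>2"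
      by (simp add: power2_eq_square algebra_simps)
    then show ?thesis
      using \<alpha> c strong by (intro mult_mono mult_left_mono) auto
  qed
  ultimately show ?thesis
    by (simp add: algebra_simps)
qed

lemma norm_average_gradient_error_le:
  fixes gradf :: "'v::real_normed_vector \<Rightarrow> 'v" and v :: "'i \<Rightarrow> 'v" and p :: nat
  assumes lip: "L-lipschitz_on UNIV gradf"
  shows "(norm ((1 / real p) *\<^sub>R (\<Sum>i\<in>J. gradf (v i) - gradf x)))\<^sup>2
    \<le> real (card J) * L\<^sup>2 / (real p)\<^sup>2 * (\<Sum>i\<in>J. (norm (x - v i))\<^sup>2)"
proof -
  have "(norm (gradf (v i) - gradf x))\<^sup>2 \<le> L\<^sup>2 * (norm (x - v i))\<^sup>2" for i
  proof -
    have "norm (gradf (v i) - gradf x) \<le> L * norm (x - v i)"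
      using lipschitz_onD[OF lip, of "v i" x] by (simp add: dist_norm norm_minus_commute)
    from power_mono[OF this] show ?thesis
      by (simp add: power_mult_distrib)
  qed
  then have "(norm (\<Sum>i\<in>J. gradf (v i) - gradf x))\<^sup>2 \<le> real (card J) * (\<Sum>i\<in>J. L\<^sup>2 * (norm (x - v i))\<^sup>2)"
    by (intro order_trans[OF norm_sum_squared_le] mult_left_mono sum_mono) auto
  then show ?thesis
    by (simp add: power_divide sum_distrib_left sum_divide_distrib[symmetric] divide_right_mono mult.assoc)
qed

lemma parallel_gradient_step_le:
  fixes gradf :: "'v::real_inner \<Rightarrow> 'v" and v :: "'i \<Rightarrow> 'v" and L :: real and p :: nat
  assumes c: "c > 0" and \<alpha>: "\<alpha> > 0" "4 * \<alpha> * L \<le> 1"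
    and lip: "L-lipschitz_on UNIV gradf"
    and cocoercive: "(norm (gradf x))\<^sup>2 \<le> 2 * L * ((x - xstar) \<bullet> gradf x)"
    and strong: "c * (norm (x - xstar))\<^sup>2 \<le> (x - xstar) \<bullet> gradf x"
    and p: "p > 0" "card J \<le> p" "p \<le> 2 * card J"
  shows "(norm (x - xstar - (\<alpha> / real p) *\<^sub>R (\<Sum>i\<in>J. gradf (v i))))\<^sup>2
    \<le> (1 - \<alpha> * c / 4) * (norm (x - xstar))\<^sup>2
      + (2 * \<alpha> / c + 2 * \<alpha>\<^sup>2) * (card J * L\<^sup>2 / (real p)\<^sup>2) * (\<Sum>i\<in>J. (norm (x - v i))\<^sup>2)"
proof -
  define a where "a = card J / real p"
  define e where "e = (1 / real p) *\<^sub>R (\<Sum>i\<in>J. gradf (v i) - gradf x)"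
  have "(\<alpha> / real p) *\<^sub>R (\<Sum>i\<in>J. gradf (v i)) = \<alpha> *\<^sub>R (a *\<^sub>R gradf x + e)"
    using p by (simp add: a_def e_def sum_subtractf sum_constant_scaleR scaleR_diff_right algebra_simps)
  moreover have "1 / 2 \<le> a" "a \<le> 1"
    using p by (auto simp: a_def field_simps)
  ultimately have "(norm (x - xstar - (\<alpha> / real p) *\<^sub>R (\<Sum>i\<in>J. gradf (v i))))\<^sup>2
      \<le> (1 - \<alpha> * c / 4) * (norm (x - xstar))\<^sup>2 + (2 * \<alpha> / c + 2 * \<alpha>\<^sup>2) * (norm e)\<^sup>2"
    using inexact_gradient_step_le[OF c \<alpha> _ _ cocoercive strong] by simp
  also have "\<dots> \<le> (1 - \<alpha> * c / 4) * (norm (x - xstar))\<^sup>2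
      + (2 * \<alpha> / c + 2 * \<alpha>\<^sup>2) * (card J * L\<^sup>2 / (real p)\<^sup>2 * (\<Sum>i\<in>J. (norm (x - v i))\<^sup>2))"
    unfolding e_def using c \<alpha> by (intro add_left_mono mult_left_mono norm_average_gradient_error_le[OF lip]) auto
  finally show ?thesis
    by (simp add: mult.assoc)
qed

section \<open>Conditional expectation and conditional independence\<close>

lemma nn_integral_mult_comp_eqI:
  assumes [measurable]: "X \<in> measurable M N" "h1 \<in> borel_measurable M" "h2 \<in> borel_measurable M"
    and eq: "\<And>A. A \<in> sets N \<Longrightarrow>
      (\<integral>\<^sup>+\<omega>. h1 \<omega> * indicator A (X \<omega>) \<partial>M) = (\<integral>\<^sup>+\<omega>. h2 \<omega> * indicator A (X \<omega>) \<partial>M)"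
    and [measurable]: "\<phi> \<in> borel_measurable N"
  shows "(\<integral>\<^sup>+\<omega>. h1 \<omega> * \<phi> (X \<omega>) \<partial>M) = (\<integral>\<^sup>+\<omega>. h2 \<omega> * \<phi> (X \<omega>) \<partial>M)"
proof -
  have emeasure_eq: "emeasure (distr (density M h) N X) A = (\<integral>\<^sup>+\<omega>. h \<omega> * indicator A (X \<omega>) \<partial>M)"
    if [measurable]: "h \<in> borel_measurable M" "A \<in> sets N" for h A
  proof -
    have "emeasure (distr (density M h) N X) A = (\<integral>\<^sup>+\<omega>. h \<omega> * indicator (X -` A \<inter> space M) \<omega> \<partial>M)"
      by (simp add: emeasure_distr emeasure_density)
    also have "\<dots> = (\<integral>\<^sup>+\<omega>. h \<omega> * indicator A (X \<omega>) \<partial>M)"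
      by (intro nn_integral_cong) (auto simp: indicator_def)
    finally show ?thesis .
  qed
  have "distr (density M h1) N X = distr (density M h2) N X"
    by (rule measure_eqI) (simp_all add: emeasure_eq eq)
  moreover have "(\<integral>\<^sup>+\<omega>. h \<omega> * \<phi> (X \<omega>) \<partial>M) = integral\<^sup>N (distr (density M h) N X) \<phi>"
    if [measurable]: "h \<in> borel_measurable M" for h
    by (simp add: nn_integral_distr nn_integral_density)
  ultimately show ?thesis
    by simp
qed

context sigma_finite_subalgebra
begin

lemma nn_cond_exp_finite:
  assumes [measurable]: "f \<in> borel_measurable M" and "(\<integral>\<^sup>+\<omega>. f \<omega> \<partial>M) \<noteq> \<infinity>"
  shows "AE \<omega> in M. nn_cond_exp M F f \<omega> \<noteq> \<infinity>"
  using nn_cond_exp_intg[of "\<lambda>_. 1" f] assms by (intro nn_integral_PInf_AE) auto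

lemma ennreal_real_cond_exp:
  assumes [measurable]: "f \<in> borel_measurable M" and nonneg: "\<And>\<omega>. 0 \<le> f \<omega>"
    and finite: "AE \<omega> in M. nn_cond_exp M F (\<lambda>\<omega>. ennreal (f \<omega>)) \<omega> \<noteq> \<infinity>"
  shows "AE \<omega> in M. ennreal (real_cond_exp M F f \<omega>) = nn_cond_exp M F (\<lambda>\<omega>. ennreal (f \<omega>)) \<omega>"
proof -
  have "(\<lambda>\<omega>. ennreal (- f \<omega>)) = (\<lambda>_. 0)"
    using nonneg by (simp add: fun_eq_iff ennreal_neg)
  then have "AE \<omega> in M. nn_cond_exp M F (\<lambda>\<omega>. ennreal (- f \<omega>)) \<omega> = 0"
    using nn_cond_exp_F_meas[of "\<lambda>_. 0"] by auto
  with finite show ?thesis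
    unfolding real_cond_exp_def by eventually_elim (simp add: ennreal_enn2real_if)
qed

lemma ennreal_real_cond_exp_integrable:
  assumes "integrable M f" and "\<And>\<omega>. 0 \<le> f \<omega>"
  shows "AE \<omega> in M. ennreal (real_cond_exp M F f \<omega>) = nn_cond_exp M F (\<lambda>\<omega>. ennreal (f \<omega>)) \<omega>"
  using assms by (intro ennreal_real_cond_exp nn_cond_exp_finite) (auto simp: integrable_iff_bounded)

lemma ennreal_real_cond_exp_bounded:
  assumes [measurable]: "f \<in> borel_measurable M" and "\<And>\<omega>. 0 \<le> f \<omega>" "\<And>\<omega>. f \<omega> \<le> C"
  shows "AE \<omega> in M. ennreal (real_cond_exp M F f \<omega>) = nn_cond_exp M F (\<lambda>\<omega>. ennreal (f \<omega>)) \<omega>"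
proof (rule ennreal_real_cond_exp)
  have "AE \<omega> in M. nn_cond_exp M F (\<lambda>\<omega>. ennreal (f \<omega>)) \<omega> \<le> nn_cond_exp M F (\<lambda>_. ennreal C) \<omega>"
    using assms by (intro nn_cond_exp_mono) (auto intro: ennreal_leI)
  moreover have "AE \<omega> in M. ennreal C = nn_cond_exp M F (\<lambda>_. ennreal C) \<omega>"
    by (rule nn_cond_exp_F_meas) simp
  ultimately show "AE \<omega> in M. nn_cond_exp M F (\<lambda>\<omega>. ennreal (f \<omega>)) \<omega> \<noteq> \<infinity>"
    by eventually_elim (auto simp: top_unique)
qed (use assms in auto)

context
  fixes X :: "'i \<Rightarrow> 'a \<Rightarrow> 'b::topological_space" and I :: "'i set" and i j :: 'i
  assumes indep: "cond_indep_vars M F X I"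
    and ij: "i \<in> I" "j \<in> I" "i \<noteq> j"
    and [measurable]: "X i \<in> borel_measurable M" "X j \<in> borel_measurable M"
begin

lemma cond_indep_vars_indicator_mult:
  assumes [measurable]: "A \<in> sets borel" "B \<in> sets borel"
  shows "AE \<omega> in M. nn_cond_exp M F (\<lambda>\<omega>. indicator A (X i \<omega>) * indicator B (X j \<omega>)) \<omega>
    = nn_cond_exp M F (\<lambda>\<omega>. indicator A (X i \<omega>)) \<omega> * nn_cond_exp M F (\<lambda>\<omega>. indicator B (X j \<omega>)) \<omega>"
proof -
  let ?A = "\<lambda>k. if k = i then A else B"
  have "AE \<omega> in M. real_cond_exp M F (\<lambda>\<omega>. \<Prod>k\<in>{i, j}. indicator (?A k) (X k \<omega>)) \<omega>
      = (\<Prod>k\<in>{i, j}. real_cond_exp M F (\<lambda>\<omega>. indicator (?A k) (X k \<omega>)) \<omega>)"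
    using indep[unfolded cond_indep_vars_def, rule_format, of "{i, j}" ?A] ij by auto
  then have "AE \<omega> in M. real_cond_exp M F (\<lambda>\<omega>. indicator A (X i \<omega>) * indicator B (X j \<omega>)) \<omega>
      = real_cond_exp M F (\<lambda>\<omega>. indicator A (X i \<omega>)) \<omega> * real_cond_exp M F (\<lambda>\<omega>. indicator B (X j \<omega>)) \<omega>"
    using ij by simp
  moreover have "AE \<omega> in M. ennreal (real_cond_exp M F (\<lambda>\<omega>. indicator A (X i \<omega>) * indicator B (X j \<omega>)) \<omega>)
      = nn_cond_exp M F (\<lambda>\<omega>. ennreal (indicator A (X i \<omega>) * indicator B (X j \<omega>))) \<omega>"
    by (rule ennreal_real_cond_exp_bounded[where C=1]) (auto simp: indicator_def)
  moreover have "AE \<omega> in M. ennreal (real_cond_exp M F (\<lambda>\<omega>. indicator A (X i \<omega>)) \<omega>)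
      = nn_cond_exp M F (\<lambda>\<omega>. ennreal (indicator A (X i \<omega>))) \<omega>"
    by (rule ennreal_real_cond_exp_bounded[where C=1]) (auto simp: indicator_def)
  moreover have "AE \<omega> in M. ennreal (real_cond_exp M F (\<lambda>\<omega>. indicator B (X j \<omega>)) \<omega>)
      = nn_cond_exp M F (\<lambda>\<omega>. ennreal (indicator B (X j \<omega>))) \<omega>"
    by (rule ennreal_real_cond_exp_bounded[where C=1]) (auto simp: indicator_def)
  moreover have "AE \<omega> in M. 0 \<le> real_cond_exp M F (\<lambda>\<omega>. indicator A (X i \<omega>)) \<omega>"
    by (rule real_cond_exp_pos) auto
  ultimately show ?thesis
    by eventually_elim (simp add: ennreal_mult' ennreal_indicator)
qed

lemma cond_indep_vars_nn_integral_indicator_mult: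
  assumes [measurable]: "A \<in> sets borel" "B \<in> sets borel"
  shows "(\<integral>\<^sup>+\<omega>. indicator A (X i \<omega>) * indicator B (X j \<omega>) \<partial>M)
    = (\<integral>\<^sup>+\<omega>. nn_cond_exp M F (\<lambda>\<omega>. indicator A (X i \<omega>)) \<omega> * nn_cond_exp M F (\<lambda>\<omega>. indicator B (X j \<omega>)) \<omega> \<partial>M)"
proof -
  have "(\<integral>\<^sup>+\<omega>. indicator A (X i \<omega>) * indicator B (X j \<omega>) \<partial>M)
      = (\<integral>\<^sup>+\<omega>. nn_cond_exp M F (\<lambda>\<omega>. indicator A (X i \<omega>) * indicator B (X j \<omega>)) \<omega> \<partial>M)"
    using nn_cond_exp_intg[of "\<lambda>_. 1" "\<lambda>\<omega>. indicator A (X i \<omega>) * indicator B (X j \<omega>)"] by simp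
  also have "\<dots> = (\<integral>\<^sup>+\<omega>. nn_cond_exp M F (\<lambda>\<omega>. indicator A (X i \<omega>)) \<omega>
      * nn_cond_exp M F (\<lambda>\<omega>. indicator B (X j \<omega>)) \<omega> \<partial>M)"
    using cond_indep_vars_indicator_mult[OF assms] by (rule nn_integral_cong_AE)
  finally show ?thesis .
qed

lemma cond_indep_vars_nn_integral_mult:
  fixes \<phi> \<psi> :: "'b \<Rightarrow> ennreal"
  assumes [measurable]: "\<phi> \<in> borel_measurable borel" "\<psi> \<in> borel_measurable borel"
  shows "(\<integral>\<^sup>+\<omega>. \<phi> (X i \<omega>) * \<psi> (X j \<omega>) \<partial>M)
    = (\<integral>\<^sup>+\<omega>. nn_cond_exp M F (\<lambda>\<omega>. \<phi> (X i \<omega>)) \<omega> * nn_cond_exp M F (\<lambda>\<omega>. \<psi> (X j \<omega>)) \<omega> \<partial>M)"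
proof -
  let ?E = "nn_cond_exp M F"
  \<comment> \<open>extend from indicators of \<open>X i\<close> to \<open>\<phi>\<close>, the indicator of \<open>X j\<close> being fixed\<close>
  have left: "(\<integral>\<^sup>+\<omega>. \<phi> (X i \<omega>) * indicator B (X j \<omega>) \<partial>M)
      = (\<integral>\<^sup>+\<omega>. ?E (\<lambda>\<omega>. \<phi> (X i \<omega>)) \<omega> * indicator B (X j \<omega>) \<partial>M)"
    if [measurable]: "B \<in> sets borel" for B
  proof -
    have "(\<integral>\<^sup>+\<omega>. indicator B (X j \<omega>) * \<phi> (X i \<omega>) \<partial>M)
        = (\<integral>\<^sup>+\<omega>. ?E (\<lambda>\<omega>. indicator B (X j \<omega>)) \<omega> * \<phi> (X i \<omega>) \<partial>M)"
    proof (rule nn_integral_mult_comp_eqI[where X = "X i" and N = borel])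
      fix A :: "'b set" assume [measurable]: "A \<in> sets borel"
      show "(\<integral>\<^sup>+\<omega>. indicator B (X j \<omega>) * indicator A (X i \<omega>) \<partial>M)
          = (\<integral>\<^sup>+\<omega>. ?E (\<lambda>\<omega>. indicator B (X j \<omega>)) \<omega> * indicator A (X i \<omega>) \<partial>M)"
        using cond_indep_vars_nn_integral_indicator_mult[of A B]
          nn_cond_exp_intg[of "?E (\<lambda>\<omega>. indicator B (X j \<omega>))" "\<lambda>\<omega>. indicator A (X i \<omega>)"]
        by (simp add: mult.commute)
    qed auto
    then show ?thesis
      using nn_cond_exp_intg[of "?E (\<lambda>\<omega>. indicator B (X j \<omega>))" "\<lambda>\<omega>. \<phi> (X i \<omega>)"]
        nn_cond_exp_intg[of "?E (\<lambda>\<omega>. \<phi> (X i \<omega>))" "\<lambda>\<omega>. indicator B (X j \<omega>)"]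
      by (simp add: mult.commute)
  qed
  have "(\<integral>\<^sup>+\<omega>. \<phi> (X i \<omega>) * \<psi> (X j \<omega>) \<partial>M) = (\<integral>\<^sup>+\<omega>. ?E (\<lambda>\<omega>. \<phi> (X i \<omega>)) \<omega> * \<psi> (X j \<omega>) \<partial>M)"
    by (rule nn_integral_mult_comp_eqI[where X = "X j" and N = borel]) (auto simp: left)
  also have "\<dots> = (\<integral>\<^sup>+\<omega>. ?E (\<lambda>\<omega>. \<phi> (X i \<omega>)) \<omega> * ?E (\<lambda>\<omega>. \<psi> (X j \<omega>)) \<omega> \<partial>M)"
    by (rule nn_cond_exp_intg[symmetric]) auto
  finally show ?thesis .
qed

lemma cond_indep_vars_integral_mult_nonneg:
  fixes \<phi> \<psi> :: "'b \<Rightarrow> real"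
  assumes [measurable]: "\<phi> \<in> borel_measurable borel" "\<psi> \<in> borel_measurable borel"
    and nonneg: "\<And>y. 0 \<le> \<phi> y" "\<And>y. 0 \<le> \<psi> y"
    and integrable: "integrable M (\<lambda>\<omega>. \<phi> (X i \<omega>))" "integrable M (\<lambda>\<omega>. \<psi> (X j \<omega>))"
      "integrable M (\<lambda>\<omega>. \<phi> (X i \<omega>) * \<psi> (X j \<omega>))"
  shows "integrable M (\<lambda>\<omega>. real_cond_exp M F (\<lambda>\<omega>. \<phi> (X i \<omega>)) \<omega> * real_cond_exp M F (\<lambda>\<omega>. \<psi> (X j \<omega>)) \<omega>)"
    and "(\<integral>\<omega>. \<phi> (X i \<omega>) * \<psi> (X j \<omega>) \<partial>M)
      = (\<integral>\<omega>. real_cond_exp M F (\<lambda>\<omega>. \<phi> (X i \<omega>)) \<omega> * real_cond_exp M F (\<lambda>\<omega>. \<psi> (X j \<omega>)) \<omega> \<partial>M)"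
proof -
  define E\<phi> where "E\<phi> = real_cond_exp M F (\<lambda>\<omega>. \<phi> (X i \<omega>))"
  define E\<psi> where "E\<psi> = real_cond_exp M F (\<lambda>\<omega>. \<psi> (X j \<omega>))"
  have [measurable]: "E\<phi> \<in> borel_measurable M" "E\<psi> \<in> borel_measurable M"
    by (simp_all add: E\<phi>_def E\<psi>_def)
  have E_nonneg: "AE \<omega> in M. 0 \<le> E\<phi> \<omega>" "AE \<omega> in M. 0 \<le> E\<psi> \<omega>"
    unfolding E\<phi>_def E\<psi>_def using nonneg by (auto intro!: real_cond_exp_pos)
  have "(\<integral>\<^sup>+\<omega>. ennreal (\<phi> (X i \<omega>) * \<psi> (X j \<omega>)) \<partial>M)
      = (\<integral>\<^sup>+\<omega>. ennreal (\<phi> (X i \<omega>)) * ennreal (\<psi> (X j \<omega>)) \<partial>M)"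
    using nonneg by (simp add: ennreal_mult)
  also have "\<dots> = (\<integral>\<^sup>+\<omega>. nn_cond_exp M F (\<lambda>\<omega>. ennreal (\<phi> (X i \<omega>))) \<omega>
      * nn_cond_exp M F (\<lambda>\<omega>. ennreal (\<psi> (X j \<omega>))) \<omega> \<partial>M)"
    by (rule cond_indep_vars_nn_integral_mult) auto
  also have "\<dots> = (\<integral>\<^sup>+\<omega>. ennreal (E\<phi> \<omega> * E\<psi> \<omega>) \<partial>M)"
    using ennreal_real_cond_exp_integrable[OF integrable(1) nonneg(1)]
      ennreal_real_cond_exp_integrable[OF integrable(2) nonneg(2)] E_nonneg
    by (intro nn_integral_cong_AE) (auto simp: E\<phi>_def E\<psi>_def ennreal_mult)
  finally have nn_eq: "(\<integral>\<^sup>+\<omega>. ennreal (\<phi> (X i \<omega>) * \<psi> (X j \<omega>)) \<partial>M)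
      = (\<integral>\<^sup>+\<omega>. ennreal (E\<phi> \<omega> * E\<psi> \<omega>) \<partial>M)" .
  have E_mult_nonneg: "AE \<omega> in M. 0 \<le> E\<phi> \<omega> * E\<psi> \<omega>"
    using E_nonneg by eventually_elim simp
  have "(\<integral>\<^sup>+\<omega>. ennreal (\<phi> (X i \<omega>) * \<psi> (X j \<omega>)) \<partial>M) < \<infinity>"
    using integrable(3) nonneg by (simp add: nn_integral_eq_integral)
  with nn_eq E_mult_nonneg show "integrable M (\<lambda>\<omega>. E\<phi> \<omega> * E\<psi> \<omega>)"
    by (intro integrableI_nonneg) auto
  show "(\<integral>\<omega>. \<phi> (X i \<omega>) * \<psi> (X j \<omega>) \<partial>M) = (\<integral>\<omega>. E\<phi> \<omega> * E\<psi> \<omega> \<partial>M)"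
    using nn_eq E_mult_nonneg nonneg by (simp add: integral_eq_nn_integral)
qed

lemma cond_indep_vars_integral_mult_dominated:
  fixes g h u w :: "'b \<Rightarrow> real"
  assumes [measurable]: "u \<in> borel_measurable borel" "w \<in> borel_measurable borel"
    and integrable: "integrable M (\<lambda>\<omega>. g (X i \<omega>))" "integrable M (\<lambda>\<omega>. h (X j \<omega>))"
      "integrable M (\<lambda>\<omega>. g (X i \<omega>) * h (X j \<omega>))"
    and u: "\<And>y. 0 \<le> u y" "\<And>y. u y \<le> \<bar>g y\<bar>" and w: "\<And>z. 0 \<le> w z" "\<And>z. w z \<le> \<bar>h z\<bar>"
  shows "integrable M (\<lambda>\<omega>. u (X i \<omega>)) \<and> integrable M (\<lambda>\<omega>. w (X j \<omega>))
      \<and> integrable M (\<lambda>\<omega>. u (X i \<omega>) * w (X j \<omega>))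
      \<and> integrable M (\<lambda>\<omega>. real_cond_exp M F (\<lambda>\<omega>. u (X i \<omega>)) \<omega> * real_cond_exp M F (\<lambda>\<omega>. w (X j \<omega>)) \<omega>)
      \<and> (\<integral>\<omega>. u (X i \<omega>) * w (X j \<omega>) \<partial>M)
        = (\<integral>\<omega>. real_cond_exp M F (\<lambda>\<omega>. u (X i \<omega>)) \<omega> * real_cond_exp M F (\<lambda>\<omega>. w (X j \<omega>)) \<omega> \<partial>M)"
proof -
  have "integrable M (\<lambda>\<omega>. u (X i \<omega>))"
    by (rule Bochner_Integration.integrable_bound[OF integrable(1)]) (simp_all add: u)
  moreover have "integrable M (\<lambda>\<omega>. w (X j \<omega>))"
    by (rule Bochner_Integration.integrable_bound[OF integrable(2)]) (simp_all add: w)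
  moreover have "integrable M (\<lambda>\<omega>. u (X i \<omega>) * w (X j \<omega>))"
    by (rule Bochner_Integration.integrable_bound[OF integrable(3)])
      (simp_all add: abs_mult u w mult_mono)
  ultimately show ?thesis
    using cond_indep_vars_integral_mult_nonneg[of u w] u(1) w(1) by simp
qed

lemma cond_indep_vars_integral_mult:
  fixes g h :: "'b \<Rightarrow> real"
  assumes [measurable]: "g \<in> borel_measurable borel" "h \<in> borel_measurable borel"
    and integrable: "integrable M (\<lambda>\<omega>. g (X i \<omega>))" "integrable M (\<lambda>\<omega>. h (X j \<omega>))"
      "integrable M (\<lambda>\<omega>. g (X i \<omega>) * h (X j \<omega>))"
  shows "integrable M (\<lambda>\<omega>. real_cond_exp M F (\<lambda>\<omega>. g (X i \<omega>)) \<omega> * real_cond_exp M F (\<lambda>\<omega>. h (X j \<omega>)) \<omega>)"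
    and "(\<integral>\<omega>. g (X i \<omega>) * h (X j \<omega>) \<partial>M)
      = (\<integral>\<omega>. real_cond_exp M F (\<lambda>\<omega>. g (X i \<omega>)) \<omega> * real_cond_exp M F (\<lambda>\<omega>. h (X j \<omega>)) \<omega> \<partial>M)"
proof -
  define pos :: "('b \<Rightarrow> real) \<Rightarrow> 'b \<Rightarrow> real" where "pos u y = max 0 (u y)" for u y
  define neg :: "('b \<Rightarrow> real) \<Rightarrow> 'b \<Rightarrow> real" where "neg u y = max 0 (- u y)" for u y
  let ?E = "\<lambda>u k. real_cond_exp M F (\<lambda>\<omega>. u (X k \<omega>))"
  have split: "u y = pos u y - neg u y" for u y
    by (simp add: pos_def neg_def)
  have [measurable]: "pos g \<in> borel_measurable borel" "neg g \<in> borel_measurable borel"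
    "pos h \<in> borel_measurable borel" "neg h \<in> borel_measurable borel"
    unfolding pos_def neg_def by (simp_all add: borel_measurable_max borel_measurable_uminus)
  have parts: "integrable M (\<lambda>\<omega>. u (X i \<omega>)) \<and> integrable M (\<lambda>\<omega>. w (X j \<omega>))
      \<and> integrable M (\<lambda>\<omega>. u (X i \<omega>) * w (X j \<omega>))
      \<and> integrable M (\<lambda>\<omega>. ?E u i \<omega> * ?E w j \<omega>)
      \<and> (\<integral>\<omega>. u (X i \<omega>) * w (X j \<omega>) \<partial>M) = (\<integral>\<omega>. ?E u i \<omega> * ?E w j \<omega> \<partial>M)"
    if "u \<in> {pos g, neg g}" "w \<in> {pos h, neg h}" for u w
    using that integrable
    by (intro cond_indep_vars_integral_mult_dominated) (auto simp: pos_def neg_def)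
  let ?P = "\<lambda>\<omega>. ?E (pos g) i \<omega> * ?E (pos h) j \<omega> - ?E (pos g) i \<omega> * ?E (neg h) j \<omega>
    - ?E (neg g) i \<omega> * ?E (pos h) j \<omega> + ?E (neg g) i \<omega> * ?E (neg h) j \<omega>"
  have "AE \<omega> in M. ?E g i \<omega> = ?E (pos g) i \<omega> - ?E (neg g) i \<omega>"
    using parts[of "pos g" "pos h"] parts[of "neg g" "pos h"]
      real_cond_exp_diff[of "\<lambda>\<omega>. pos g (X i \<omega>)" "\<lambda>\<omega>. neg g (X i \<omega>)"]
    by (simp add: split[of g, symmetric])
  moreover have "AE \<omega> in M. ?E h j \<omega> = ?E (pos h) j \<omega> - ?E (neg h) j \<omega>"
    using parts[of "pos g" "pos h"] parts[of "pos g" "neg h"]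
      real_cond_exp_diff[of "\<lambda>\<omega>. pos h (X j \<omega>)" "\<lambda>\<omega>. neg h (X j \<omega>)"]
    by (simp add: split[of h, symmetric])
  ultimately have E_eq: "AE \<omega> in M. ?E g i \<omega> * ?E h j \<omega> = ?P \<omega>"
    by eventually_elim (simp only: left_diff_distrib right_diff_distrib; linarith)
  have "integrable M ?P"
    using parts by auto
  then show "integrable M (\<lambda>\<omega>. ?E g i \<omega> * ?E h j \<omega>)"
    by (rule integrable_cong_AE_imp[OF _ _ AE_symmetric[OF E_eq]]) simp
  have "g (X i \<omega>) * h (X j \<omega>)
      = pos g (X i \<omega>) * pos h (X j \<omega>) - pos g (X i \<omega>) * neg h (X j \<omega>)
        - neg g (X i \<omega>) * pos h (X j \<omega>) + neg g (X i \<omega>) * neg h (X j \<omega>)" for \<omega>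
    by (subst (1 2) split) (simp only: left_diff_distrib right_diff_distrib; linarith)
  then have "(\<integral>\<omega>. g (X i \<omega>) * h (X j \<omega>) \<partial>M) = (\<integral>\<omega>. ?P \<omega> \<partial>M)"
    using parts by simp
  also have "\<dots> = (\<integral>\<omega>. ?E g i \<omega> * ?E h j \<omega> \<partial>M)"
    using E_eq by (intro integral_cong_AE) auto
  finally show "(\<integral>\<omega>. g (X i \<omega>) * h (X j \<omega>) \<partial>M) = (\<integral>\<omega>. ?E g i \<omega> * ?E h j \<omega> \<partial>M)" .
qed

end

end

section \<open>Square-integrable random vectors\<close>

definition square_integrable :: "'a measure \<Rightarrow> ('a \<Rightarrow> 'v::real_normed_vector) \<Rightarrow> bool" where
  "square_integrable M U \<longleftrightarrow> U \<in> borel_measurable M \<and> integrable M (\<lambda>\<omega>. (norm (U \<omega>))\<^sup>2)"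

lemma square_integrableI_nn_integral:
  assumes "U \<in> borel_measurable M" "(\<integral>\<^sup>+\<omega>. ennreal ((norm (U \<omega>))\<^sup>2) \<partial>M) < \<infinity>"
  shows "square_integrable M U"
  using assms by (auto simp: square_integrable_def intro!: integrableI_nonneg)

lemma nn_integral_norm_sq_eq_integral:
  "square_integrable M U \<Longrightarrow>
    (\<integral>\<^sup>+\<omega>. ennreal ((norm (U \<omega>))\<^sup>2) \<partial>M) = ennreal (\<integral>\<omega>. (norm (U \<omega>))\<^sup>2 \<partial>M)"
  by (simp add: square_integrable_def nn_integral_eq_integral)

lemma square_integrable_bound:
  assumes "integrable M h" "U \<in> borel_measurable M" "\<And>\<omega>. (norm (U \<omega>))\<^sup>2 \<le> h \<omega>"
  shows "square_integrable M U"
  unfolding square_integrable_def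
  using assms by (auto intro!: Bochner_Integration.integrable_bound[OF assms(1)] AE_I2 order_trans[OF _ abs_ge_self])

lemma square_integrable_diff:
  fixes U W :: "'a \<Rightarrow> 'v::euclidean_space"
  assumes "square_integrable M U" "square_integrable M W"
  shows "square_integrable M (\<lambda>\<omega>. U \<omega> - W \<omega>)"
  using assms norm_add_squared_le[of "U \<omega>" "- W \<omega>" for \<omega>]
  by (intro square_integrable_bound[where h = "\<lambda>\<omega>. 2 * (norm (U \<omega>))\<^sup>2 + 2 * (norm (W \<omega>))\<^sup>2"])
    (auto simp: square_integrable_def)

lemma square_integrable_add:
  fixes U W :: "'a \<Rightarrow> 'v::euclidean_space"
  assumes "square_integrable M U" "square_integrable M W"
  shows "square_integrable M (\<lambda>\<omega>. U \<omega> + W \<omega>)"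
  using assms norm_add_squared_le[of "U \<omega>" "W \<omega>" for \<omega>]
  by (intro square_integrable_bound[where h = "\<lambda>\<omega>. 2 * (norm (U \<omega>))\<^sup>2 + 2 * (norm (W \<omega>))\<^sup>2"])
    (auto simp: square_integrable_def)

lemma integrable_bound_norm_mult:
  fixes U W :: "'a \<Rightarrow> 'v::real_normed_vector"
  assumes "square_integrable M U" "square_integrable M W" "f \<in> borel_measurable M"
    and "\<And>\<omega>. \<bar>f \<omega>\<bar> \<le> norm (U \<omega>) * norm (W \<omega>)"
  shows "integrable M f"
proof (rule Bochner_Integration.integrable_bound)
  show "integrable M (\<lambda>\<omega>. (norm (U \<omega>))\<^sup>2 + (norm (W \<omega>))\<^sup>2)"
    using assms by (auto simp: square_integrable_def)
  show "AE \<omega> in M. norm (f \<omega>) \<le> norm ((norm (U \<omega>))\<^sup>2 + (norm (W \<omega>))\<^sup>2)"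
  proof (intro AE_I2)
    fix \<omega>
    have "\<bar>f \<omega>\<bar> \<le> norm (U \<omega>) * norm (W \<omega>)"
      by (rule assms(4))
    also have "\<dots> \<le> (norm (U \<omega>))\<^sup>2 + (norm (W \<omega>))\<^sup>2"
      using sum_squares_bound[of "norm (U \<omega>)" "norm (W \<omega>)"] mult_nonneg_nonneg[OF norm_ge_zero norm_ge_zero, of "U \<omega>" "W \<omega>"]
      by linarith
    finally show "norm (f \<omega>) \<le> norm ((norm (U \<omega>))\<^sup>2 + (norm (W \<omega>))\<^sup>2)"
      by simp
  qed
qed fact

lemma integrable_inner:
  fixes U W :: "'a \<Rightarrow> 'v::euclidean_space"
  assumes "square_integrable M U" "square_integrable M W"
  shows "integrable M (\<lambda>\<omega>. U \<omega> \<bullet> W \<omega>)"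
proof (rule integrable_bound_norm_mult[OF assms])
  have [measurable]: "U \<in> borel_measurable M" "W \<in> borel_measurable M"
    using assms by (simp_all add: square_integrable_def)
  show "(\<lambda>\<omega>. U \<omega> \<bullet> W \<omega>) \<in> borel_measurable M"
    by measurable
qed (rule Cauchy_Schwarz_ineq2)

lemma integrable_inner_Basis_mult:
  fixes U W :: "'a \<Rightarrow> 'v::euclidean_space"
  assumes "square_integrable M U" "square_integrable M W" "b \<in> Basis"
  shows "integrable M (\<lambda>\<omega>. (U \<omega> \<bullet> b) * (W \<omega> \<bullet> b))"
proof (rule integrable_bound_norm_mult[OF assms(1,2)])
  have [measurable]: "U \<in> borel_measurable M" "W \<in> borel_measurable M"
    using assms by (simp_all add: square_integrable_def)
  show "(\<lambda>\<omega>. (U \<omega> \<bullet> b) * (W \<omega> \<bullet> b)) \<in> borel_measurable M"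
    by measurable
  show "\<bar>(U \<omega> \<bullet> b) * (W \<omega> \<bullet> b)\<bar> \<le> norm (U \<omega>) * norm (W \<omega>)" for \<omega>
    unfolding abs_mult using Basis_le_norm[OF assms(3)] by (intro mult_mono) auto
qed

lemma integral_inner_eq_sum_Basis:
  fixes U W :: "'a \<Rightarrow> 'v::euclidean_space"
  assumes "square_integrable M U" "square_integrable M W"
  shows "(\<integral>\<omega>. U \<omega> \<bullet> W \<omega> \<partial>M) = (\<Sum>b\<in>Basis. \<integral>\<omega>. (U \<omega> \<bullet> b) * (W \<omega> \<bullet> b) \<partial>M)"
proof -
  have "(\<integral>\<omega>. U \<omega> \<bullet> W \<omega> \<partial>M) = (\<integral>\<omega>. (\<Sum>b\<in>Basis. (U \<omega> \<bullet> b) * (W \<omega> \<bullet> b)) \<partial>M)"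
    by (rule Bochner_Integration.integral_cong[OF refl]) (rule euclidean_inner)
  also have "\<dots> = (\<Sum>b\<in>Basis. \<integral>\<omega>. (U \<omega> \<bullet> b) * (W \<omega> \<bullet> b) \<partial>M)"
    by (rule Bochner_Integration.integral_sum) (rule integrable_inner_Basis_mult[OF assms])
  finally show ?thesis .
qed

lemma integral_norm_sq_sub_orthogonal_sum:
  fixes Y :: "'a \<Rightarrow> 'v::euclidean_space" and n :: "'i \<Rightarrow> 'a \<Rightarrow> 'v"
  assumes "finite J" and Y: "square_integrable M Y" and n: "\<And>i. i \<in> J \<Longrightarrow> square_integrable M (n i)"
    and Y_orth: "\<And>i. i \<in> J \<Longrightarrow> (\<integral>\<omega>. Y \<omega> \<bullet> n i \<omega> \<partial>M) = 0"
    and n_orth: "\<And>i j. i \<in> J \<Longrightarrow> j \<in> J \<Longrightarrow> i \<noteq> j \<Longrightarrow> (\<integral>\<omega>. n i \<omega> \<bullet> n j \<omega> \<partial>M) = 0"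
  shows "square_integrable M (\<lambda>\<omega>. Y \<omega> - a *\<^sub>R (\<Sum>i\<in>J. n i \<omega>))"
    and "(\<integral>\<omega>. (norm (Y \<omega> - a *\<^sub>R (\<Sum>i\<in>J. n i \<omega>)))\<^sup>2 \<partial>M)
      = (\<integral>\<omega>. (norm (Y \<omega>))\<^sup>2 \<partial>M) + a\<^sup>2 * (\<Sum>i\<in>J. \<integral>\<omega>. (norm (n i \<omega>))\<^sup>2 \<partial>M)"
proof -
  have expand: "(norm (Y \<omega> - a *\<^sub>R (\<Sum>i\<in>J. n i \<omega>)))\<^sup>2
      = (norm (Y \<omega>))\<^sup>2 - 2 * a * (\<Sum>i\<in>J. Y \<omega> \<bullet> n i \<omega>) + a\<^sup>2 * (\<Sum>i\<in>J. \<Sum>j\<in>J. n i \<omega> \<bullet> n j \<omega>)" for \<omega>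
    unfolding norm_diff_scaleR_squared
    by (simp add: power2_norm_eq_inner inner_sum_left inner_sum_right) (rule disjI2, rule sum.swap)
  have [measurable]: "Y \<in> borel_measurable M" "\<And>i. i \<in> J \<Longrightarrow> n i \<in> borel_measurable M"
    using Y n by (auto simp: square_integrable_def)
  have integrable: "integrable M (\<lambda>\<omega>. (norm (Y \<omega>))\<^sup>2)" "\<And>i. i \<in> J \<Longrightarrow> integrable M (\<lambda>\<omega>. Y \<omega> \<bullet> n i \<omega>)"
    "\<And>i j. i \<in> J \<Longrightarrow> j \<in> J \<Longrightarrow> integrable M (\<lambda>\<omega>. n i \<omega> \<bullet> n j \<omega>)"
    using Y n by (auto simp: square_integrable_def integrable_inner)
  have sums_integrable: "integrable M (\<lambda>\<omega>. \<Sum>i\<in>J. Y \<omega> \<bullet> n i \<omega>)"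
    "integrable M (\<lambda>\<omega>. \<Sum>i\<in>J. \<Sum>j\<in>J. n i \<omega> \<bullet> n j \<omega>)"
    using integrable by (auto intro!: Bochner_Integration.integrable_sum)
  then show "square_integrable M (\<lambda>\<omega>. Y \<omega> - a *\<^sub>R (\<Sum>i\<in>J. n i \<omega>))"
    unfolding square_integrable_def expand using integrable by auto
  have "(\<integral>\<omega>. (\<Sum>i\<in>J. Y \<omega> \<bullet> n i \<omega>) \<partial>M) = 0"
    using integrable Y_orth by (simp add: Bochner_Integration.integral_sum)
  moreover have "(\<integral>\<omega>. (\<Sum>j\<in>J. n i \<omega> \<bullet> n j \<omega>) \<partial>M) = (\<integral>\<omega>. (norm (n i \<omega>))\<^sup>2 \<partial>M)"
    if "i \<in> J" for i
  proof -
    have "(\<integral>\<omega>. (\<Sum>j\<in>J. n i \<omega> \<bullet> n j \<omega>) \<partial>M) = (\<Sum>j\<in>J. \<integral>\<omega>. n i \<omega> \<bullet> n j \<omega> \<partial>M)"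
      using that integrable by (intro Bochner_Integration.integral_sum) auto
    also have "\<dots> = (\<integral>\<omega>. n i \<omega> \<bullet> n i \<omega> \<partial>M)"
      using \<open>finite J\<close> that n_orth by (simp add: sum.remove[of J i], intro sum.neutral) auto
    finally show ?thesis
      by (simp add: power2_norm_eq_inner)
  qed
  then have "(\<integral>\<omega>. (\<Sum>i\<in>J. \<Sum>j\<in>J. n i \<omega> \<bullet> n j \<omega>) \<partial>M) = (\<Sum>i\<in>J. \<integral>\<omega>. (norm (n i \<omega>))\<^sup>2 \<partial>M)"
    using integrable by (simp add: Bochner_Integration.integral_sum Bochner_Integration.integrable_sum)
  ultimately show "(\<integral>\<omega>. (norm (Y \<omega> - a *\<^sub>R (\<Sum>i\<in>J. n i \<omega>)))\<^sup>2 \<partial>M)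
      = (\<integral>\<omega>. (norm (Y \<omega>))\<^sup>2 \<partial>M) + a\<^sup>2 * (\<Sum>i\<in>J. \<integral>\<omega>. (norm (n i \<omega>))\<^sup>2 \<partial>M)"
    unfolding expand using integrable(1) sums_integrable by simp
qed

context sigma_finite_subalgebra
begin

lemma integral_mult_cond_exp_eq:
  assumes [measurable]: "Z \<in> borel_measurable F" "f \<in> borel_measurable M"
    and "integrable M (\<lambda>\<omega>. Z \<omega> * f \<omega>)" and "AE \<omega> in M. real_cond_exp M F f \<omega> = g \<omega>"
    and [measurable]: "g \<in> borel_measurable M"
  shows "(\<integral>\<omega>. Z \<omega> * f \<omega> \<partial>M) = (\<integral>\<omega>. Z \<omega> * g \<omega> \<partial>M)"
proof -
  have [measurable]: "Z \<in> borel_measurable M"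
    by (rule measurable_from_subalg[OF subalg]) simp
  have "(\<integral>\<omega>. Z \<omega> * f \<omega> \<partial>M) = (\<integral>\<omega>. Z \<omega> * real_cond_exp M F f \<omega> \<partial>M)"
    using assms by (intro real_cond_exp_intg(2)[symmetric]) auto
  also have "\<dots> = (\<integral>\<omega>. Z \<omega> * g \<omega> \<partial>M)"
    using assms(4) by (intro integral_cong_AE) auto
  finally show ?thesis .
qed

lemma integral_inner_sub_cond_exp_eq_zero:
  fixes Y X m :: "'a \<Rightarrow> 'v::euclidean_space"
  assumes Y: "Y \<in> borel_measurable F" "square_integrable M Y"
    and X: "square_integrable M X" and m: "m \<in> borel_measurable F" "square_integrable M m"
    and cond_mean: "\<And>b. b \<in> Basis \<Longrightarrow> AE \<omega> in M. real_cond_exp M F (\<lambda>\<omega>. X \<omega> \<bullet> b) \<omega> = m \<omega> \<bullet> b"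
  shows "(\<integral>\<omega>. Y \<omega> \<bullet> (X \<omega> - m \<omega>) \<partial>M) = 0"
proof -
  have [measurable]: "X \<in> borel_measurable M" "m \<in> borel_measurable M"
    using X m by (simp_all add: square_integrable_def)
  have "(\<integral>\<omega>. (Y \<omega> \<bullet> b) * ((X \<omega> - m \<omega>) \<bullet> b) \<partial>M) = 0" if b: "b \<in> Basis" for b
  proof -
    have "(\<integral>\<omega>. (Y \<omega> \<bullet> b) * (X \<omega> \<bullet> b) \<partial>M) = (\<integral>\<omega>. (Y \<omega> \<bullet> b) * (m \<omega> \<bullet> b) \<partial>M)"
      using Y X b cond_mean[OF b] m
      by (intro integral_mult_cond_exp_eq integrable_inner_Basis_mult) auto
    then show ?thesis
      using integrable_inner_Basis_mult[OF Y(2) X b] integrable_inner_Basis_mult[OF Y(2) m(2) b]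
      by (simp add: inner_diff_left right_diff_distrib)
  qed
  then show ?thesis
    using integral_inner_eq_sum_Basis[OF Y(2) square_integrable_diff[OF X m(2)]] by simp
qed

lemma cond_indep_vars_integral_inner_centered_eq_zero:
  fixes X m :: "'i \<Rightarrow> 'a \<Rightarrow> 'v::euclidean_space"
  assumes indep: "cond_indep_vars M F X I" and ij: "i \<in> I" "j \<in> I" "i \<noteq> j"
    and X: "\<And>k. k \<in> {i, j} \<Longrightarrow> square_integrable M (X k)"
      "\<And>k. k \<in> {i, j} \<Longrightarrow> integrable M (X k)"
    and m: "\<And>k. k \<in> {i, j} \<Longrightarrow> m k \<in> borel_measurable F" "\<And>k. k \<in> {i, j} \<Longrightarrow> square_integrable M (m k)"
    and cond_mean: "\<And>k b. k \<in> {i, j} \<Longrightarrow> b \<in> Basis \<Longrightarrow>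
      AE \<omega> in M. real_cond_exp M F (\<lambda>\<omega>. X k \<omega> \<bullet> b) \<omega> = m k \<omega> \<bullet> b"
  shows "(\<integral>\<omega>. (X i \<omega> - m i \<omega>) \<bullet> (X j \<omega> - m j \<omega>) \<partial>M) = 0"
proof -
  have [measurable]: "X i \<in> borel_measurable M" "X j \<in> borel_measurable M"
    "m i \<in> borel_measurable M" "m j \<in> borel_measurable M"
    using X m by (simp_all add: square_integrable_def)
  have "(\<integral>\<omega>. ((X i \<omega> - m i \<omega>) \<bullet> b) * ((X j \<omega> - m j \<omega>) \<bullet> b) \<partial>M) = 0" if b: "b \<in> Basis" for b
  proof -
    have integrable: "integrable M (\<lambda>\<omega>. (U \<omega> \<bullet> b) * (W \<omega> \<bullet> b))"
      if "U \<in> {X i, X j, m i, m j}" "W \<in> {X i, X j, m i, m j}" for U W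
      using that X m b by (intro integrable_inner_Basis_mult) auto
    have "(\<integral>\<omega>. (X i \<omega> \<bullet> b) * (X j \<omega> \<bullet> b) \<partial>M)
        = (\<integral>\<omega>. real_cond_exp M F (\<lambda>\<omega>. X i \<omega> \<bullet> b) \<omega> * real_cond_exp M F (\<lambda>\<omega>. X j \<omega> \<bullet> b) \<omega> \<partial>M)"
      using integrable[of "X i" "X j"] X(2)
      by (intro cond_indep_vars_integral_mult(2)[OF indep ij, where g = "\<lambda>y. y \<bullet> b" and h = "\<lambda>y. y \<bullet> b"])
        auto
    also have "\<dots> = (\<integral>\<omega>. (m i \<omega> \<bullet> b) * (m j \<omega> \<bullet> b) \<partial>M)"
      using cond_mean[OF _ b, of i] cond_mean[OF _ b, of j]
      by (intro integral_cong_AE) (auto elim: AE_mp)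
    finally have "(\<integral>\<omega>. (X i \<omega> \<bullet> b) * (X j \<omega> \<bullet> b) \<partial>M) = (\<integral>\<omega>. (m i \<omega> \<bullet> b) * (m j \<omega> \<bullet> b) \<partial>M)" .
    moreover have "(\<integral>\<omega>. (m i \<omega> \<bullet> b) * (X j \<omega> \<bullet> b) \<partial>M) = (\<integral>\<omega>. (m i \<omega> \<bullet> b) * (m j \<omega> \<bullet> b) \<partial>M)"
      using integrable m cond_mean[OF _ b, of j] by (intro integral_mult_cond_exp_eq) auto
    moreover have "(\<integral>\<omega>. (m j \<omega> \<bullet> b) * (X i \<omega> \<bullet> b) \<partial>M) = (\<integral>\<omega>. (m j \<omega> \<bullet> b) * (m i \<omega> \<bullet> b) \<partial>M)"
      using integrable m cond_mean[OF _ b, of i] by (intro integral_mult_cond_exp_eq) auto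
    ultimately show ?thesis
      using integrable by (simp add: inner_diff_left algebra_simps)
  qed
  then show ?thesis
    using X m by (simp add: integral_inner_eq_sum_Basis square_integrable_diff)
qed

end

section \<open>One step of parallel SGD\<close>

text \<open>Step \<open>t\<close> of the iteration: \<open>Fs\<close>, \<open>J\<close>, \<open>x\<close>, \<open>v\<close> and \<open>G\<close> stand for \<open>F\<^sub>t\<close>, \<open>I\<^sub>t\<close>,
  \<open>x\<^sub>t\<close>, \<open>v\<^sub>t\<close> and the stochastic gradients computed at step \<open>t\<close>.\<close>

locale parallel_sgd_step = prob_space M
  for M :: "'a measure" +
  fixes Fs :: "'a measure"
    and f :: "'v::euclidean_space \<Rightarrow> real" and gradf :: "'v \<Rightarrow> 'v" and xstar :: 'v
    and L c \<alpha> \<sigma> B :: real and p :: nat and J :: "'i set"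
    and x :: "'a \<Rightarrow> 'v" and v G :: "'i \<Rightarrow> 'a \<Rightarrow> 'v"
  assumes subalg: "subalgebra M Fs"
    and grad: "\<And>y. GDERIV f y :> gradf y"
    and lip: "L-lipschitz_on UNIV gradf"
    and c_pos: "c > 0"
    and strong: "\<And>y z. (y - z) \<bullet> (gradf y - gradf z) \<ge> c * (norm (y - z))\<^sup>2"
    and minimizer: "\<And>y. f xstar \<le> f y"
    and alpha_pos: "\<alpha> > 0" and alpha_le: "\<alpha> \<le> 1 / (4 * L)"
    and p_pos: "p > 0" and card_le: "card J \<le> p" and card_ge: "real p / 2 \<le> real (card J)"
    and x_meas: "x \<in> borel_measurable Fs"
    and v_meas: "\<And>i. i \<in> J \<Longrightarrow> v i \<in> borel_measurable Fs"
    and G_meas: "\<And>i. i \<in> J \<Longrightarrow> G i \<in> borel_measurable M"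
    and G_int: "\<And>i. i \<in> J \<Longrightarrow> integrable M (G i)"
    and G_indep: "cond_indep_vars M Fs G J"
    and G_unbiased: "\<And>i b. i \<in> J \<Longrightarrow> b \<in> Basis \<Longrightarrow>
      AE \<omega> in M. real_cond_exp M Fs (\<lambda>\<omega>. G i \<omega> \<bullet> b) \<omega> = gradf (v i \<omega>) \<bullet> b"
    and G_var: "\<And>i. i \<in> J \<Longrightarrow>
      AE \<omega> in M. nn_cond_exp M Fs (\<lambda>\<omega>. ennreal ((norm (G i \<omega> - gradf (v i \<omega>)))\<^sup>2)) \<omega> \<le> ennreal (\<sigma>\<^sup>2)"
    and elastic: "\<And>i. i \<in> J \<Longrightarrow> (\<integral>\<^sup>+\<omega>. ennreal ((norm (x \<omega> - v i \<omega>))\<^sup>2) \<partial>M) \<le> ennreal (\<alpha>\<^sup>2 * B\<^sup>2)"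
begin

sublocale sigma_finite_subalgebra M Fs
  using subalg finite_measure_axioms
  by (intro finite_measure_subalgebra_is_sigma_finite)
    (simp add: finite_measure_subalgebra_def finite_measure_subalgebra_axioms_def)

lemma L_pos: "L > 0"
proof (rule ccontr)
  assume "\<not> L > 0"
  then have "1 / (4 * L) \<le> 0"
    by (simp add: divide_nonneg_nonpos)
  with alpha_pos alpha_le show False
    by simp
qed

lemma step_size_le: "4 * \<alpha> * L \<le> 1"
  using alpha_le L_pos by (simp add: field_simps)

lemma cocoercive: "(norm (gradf y))\<^sup>2 \<le> 2 * L * ((y - xstar) \<bullet> gradf y)"
proof (rule gradient_norm_sq_le_inner[OF grad lip L_pos _ minimizer])
  show "0 \<le> (y - z) \<bullet> (gradf y - gradf z)" for y z
    using strong[of y z] c_pos by (meson mult_nonneg_nonneg less_imp_le zero_le_power2 order_trans)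
qed

lemma gradf_xstar: "gradf xstar = 0"
  using cocoercive[of xstar] by simp

lemma contraction_factor_pos: "0 < 1 - \<alpha> * c / 4"
proof -
  have "\<alpha> * c \<le> \<alpha> * L"
    using strong_monotonicity_le_lipschitz[OF lip strong] alpha_pos by simp
  then show ?thesis
    using step_size_le by simp
qed

lemma gradf_measurable [measurable]: "gradf \<in> borel_measurable borel"
  by (rule borel_measurable_continuous_onI[OF lipschitz_on_continuous_on[OF lip]])

lemma x_measurable [measurable]: "x \<in> borel_measurable M"
  by (rule measurable_from_subalg[OF subalg x_meas])

lemma v_measurable: "i \<in> J \<Longrightarrow> v i \<in> borel_measurable M"
  by (rule measurable_from_subalg[OF subalg v_meas])

definition drift :: "'a \<Rightarrow> 'v" where
  "drift \<omega> = x \<omega> - xstar - (\<alpha> / real p) *\<^sub>R (\<Sum>i\<in>J. gradf (v i \<omega>))"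

definition noise :: "'i \<Rightarrow> 'a \<Rightarrow> 'v" where
  "noise i \<omega> = G i \<omega> - gradf (v i \<omega>)"

lemma next_iterate_eq:
  "x \<omega> - (\<alpha> / real p) *\<^sub>R (\<Sum>i\<in>J. G i \<omega>) - xstar = drift \<omega> - (\<alpha> / real p) *\<^sub>R (\<Sum>i\<in>J. noise i \<omega>)"
  by (simp add: drift_def noise_def sum_subtractf scaleR_diff_right algebra_simps)

lemma drift_measurable: "drift \<in> borel_measurable Fs"
proof -
  have "(\<lambda>\<omega>. \<Sum>i\<in>J. gradf (v i \<omega>)) \<in> borel_measurable Fs"
    using v_meas by (intro borel_measurable_sum) measurable
  with x_meas show ?thesis
    unfolding drift_def by measurable
qed

lemma square_integrable_lag: "i \<in> J \<Longrightarrow> square_integrable M (\<lambda>\<omega>. x \<omega> - v i \<omega>)"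
  using elastic[of i] v_measurable[of i]
  by (intro square_integrableI_nn_integral) (auto intro: le_less_trans)

lemma integral_lag_le: "i \<in> J \<Longrightarrow> (\<integral>\<omega>. (norm (x \<omega> - v i \<omega>))\<^sup>2 \<partial>M) \<le> \<alpha>\<^sup>2 * B\<^sup>2"
  using elastic[of i] nn_integral_norm_sq_eq_integral[OF square_integrable_lag, of i] by simp

lemma nn_integral_noise_le: "i \<in> J \<Longrightarrow> (\<integral>\<^sup>+\<omega>. ennreal ((norm (noise i \<omega>))\<^sup>2) \<partial>M) \<le> ennreal (\<sigma>\<^sup>2)"
proof -
  assume i: "i \<in> J"
  have [measurable]: "G i \<in> borel_measurable M" "v i \<in> borel_measurable M"
    using i by (simp_all add: G_meas v_measurable)
  have "(\<integral>\<^sup>+\<omega>. ennreal ((norm (noise i \<omega>))\<^sup>2) \<partial>M)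
      = (\<integral>\<^sup>+\<omega>. nn_cond_exp M Fs (\<lambda>\<omega>. ennreal ((norm (noise i \<omega>))\<^sup>2)) \<omega> \<partial>M)"
    using nn_cond_exp_intg[of "\<lambda>_. 1" "\<lambda>\<omega>. ennreal ((norm (noise i \<omega>))\<^sup>2)"]
    by (simp add: noise_def)
  also have "\<dots> \<le> (\<integral>\<^sup>+\<omega>. ennreal (\<sigma>\<^sup>2) \<partial>M)"
    using G_var[OF i] by (intro nn_integral_mono_AE) (simp add: noise_def)
  finally show ?thesis
    by (simp add: emeasure_space_1)
qed

lemma noise_measurable: "i \<in> J \<Longrightarrow> noise i \<in> borel_measurable M"
proof -
  assume i: "i \<in> J"
  have [measurable]: "G i \<in> borel_measurable M" "v i \<in> borel_measurable M"
    using i by (simp_all add: G_meas v_measurable)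
  have "noise i = (\<lambda>\<omega>. G i \<omega> - gradf (v i \<omega>))"
    by (simp add: fun_eq_iff noise_def)
  then show ?thesis
    by simp
qed

lemma square_integrable_noise: "i \<in> J \<Longrightarrow> square_integrable M (noise i)"
  using nn_integral_noise_le[of i] noise_measurable[of i]
  by (intro square_integrableI_nn_integral) (auto intro: le_less_trans)

lemma integral_noise_le: "i \<in> J \<Longrightarrow> (\<integral>\<omega>. (norm (noise i \<omega>))\<^sup>2 \<partial>M) \<le> \<sigma>\<^sup>2"
  using nn_integral_noise_le[of i] nn_integral_norm_sq_eq_integral[OF square_integrable_noise, of i]
  by simp

lemma error_terms_le:
  "(2 * \<alpha> / c + 2 * \<alpha>\<^sup>2) * (card J * L\<^sup>2 / (real p)\<^sup>2) * (card J * (\<alpha>\<^sup>2 * B\<^sup>2))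
     + (\<alpha> / real p)\<^sup>2 * (card J * \<sigma>\<^sup>2)
   \<le> 2 * \<alpha>^3 * L\<^sup>2 * B\<^sup>2 / c + 2 * \<alpha>\<^sup>2 * \<sigma>\<^sup>2 / real p + 4 * L\<^sup>2 * \<alpha>^4 * B\<^sup>2"
proof -
  define A where "A = (2 * \<alpha> / c + 2 * \<alpha>\<^sup>2) * L\<^sup>2 * \<alpha>\<^sup>2 * B\<^sup>2"
  have "card J * card J \<le> p * p"
    using card_le by (intro mult_mono) auto
  then have "real (card J) * card J / (real p)\<^sup>2 \<le> 1"
    using p_pos by (simp add: power2_eq_square flip: of_nat_mult)
  then have "(2 * \<alpha> / c + 2 * \<alpha>\<^sup>2) * (card J * L\<^sup>2 / (real p)\<^sup>2) * (card J * (\<alpha>\<^sup>2 * B\<^sup>2))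
      \<le> A"
    using alpha_pos c_pos mult_left_mono[of "real (card J) * card J / (real p)\<^sup>2" 1 A]
    by (simp add: A_def field_simps)
  moreover have "(\<alpha> / real p)\<^sup>2 * (card J * \<sigma>\<^sup>2) \<le> \<alpha>\<^sup>2 * \<sigma>\<^sup>2 / real p"
  proof -
    have "(\<alpha> / real p)\<^sup>2 * (card J * \<sigma>\<^sup>2) = \<alpha>\<^sup>2 * \<sigma>\<^sup>2 * card J / (real p)\<^sup>2"
      by (simp add: power_divide)
    also have "\<dots> \<le> \<alpha>\<^sup>2 * \<sigma>\<^sup>2 * real p / (real p)\<^sup>2"
      using card_le by (intro divide_right_mono mult_left_mono) auto
    also have "\<dots> = \<alpha>\<^sup>2 * \<sigma>\<^sup>2 / real p"
      by (simp add: power2_eq_square)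
    finally show ?thesis .
  qed
  moreover have "A = 2 * \<alpha>^3 * L\<^sup>2 * B\<^sup>2 / c + 2 * L\<^sup>2 * \<alpha>^4 * B\<^sup>2"
    using c_pos by (simp add: A_def field_simps power2_eq_square power3_eq_cube power4_eq_xxxx)
  moreover have "0 \<le> \<alpha>\<^sup>2 * \<sigma>\<^sup>2 / real p" "0 \<le> L\<^sup>2 * \<alpha>^4 * B\<^sup>2"
    by simp_all
  ultimately show ?thesis
    by linarith
qed

context
  assumes dist: "square_integrable M (\<lambda>\<omega>. x \<omega> - xstar)"
begin

lemma square_integrable_gradf_v: "i \<in> J \<Longrightarrow> square_integrable M (\<lambda>\<omega>. gradf (v i \<omega>))"
proof -
  assume i: "i \<in> J"
  have [measurable]: "v i \<in> borel_measurable M"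
    using i by (rule v_measurable)
  show ?thesis
  proof (rule square_integrable_bound)
    show "integrable M (\<lambda>\<omega>. L\<^sup>2 * (2 * (norm (x \<omega> - xstar))\<^sup>2 + 2 * (norm (x \<omega> - v i \<omega>))\<^sup>2))"
      using dist square_integrable_lag[OF i] by (simp add: square_integrable_def)
    fix \<omega>
    have "norm (gradf (v i \<omega>)) \<le> L * norm ((x \<omega> - xstar) - (x \<omega> - v i \<omega>))"
      using lipschitz_onD[OF lip, of "v i \<omega>" xstar] by (simp add: gradf_xstar dist_norm)
    then have "(norm (gradf (v i \<omega>)))\<^sup>2 \<le> L\<^sup>2 * (norm ((x \<omega> - xstar) - (x \<omega> - v i \<omega>)))\<^sup>2"
      by (metis norm_ge_zero power_mono power_mult_distrib)
    also have "\<dots> \<le> L\<^sup>2 * (2 * (norm (x \<omega> - xstar))\<^sup>2 + 2 * (norm (x \<omega> - v i \<omega>))\<^sup>2)"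
      using norm_add_squared_le[of "x \<omega> - xstar" "- (x \<omega> - v i \<omega>)"]
      by (intro mult_left_mono) (auto simp: norm_minus_commute)
    finally show "(norm (gradf (v i \<omega>)))\<^sup>2 \<le> L\<^sup>2 * (2 * (norm (x \<omega> - xstar))\<^sup>2 + 2 * (norm (x \<omega> - v i \<omega>))\<^sup>2)" .
  qed simp
qed

lemma square_integrable_G: "i \<in> J \<Longrightarrow> square_integrable M (G i)"
  using square_integrable_add[OF square_integrable_noise square_integrable_gradf_v, of i i]
  by (simp add: noise_def)

lemma drift_bound:
  shows "square_integrable M drift"
    and "(\<integral>\<omega>. (norm (drift \<omega>))\<^sup>2 \<partial>M) \<le> (1 - \<alpha> * c / 4) * (\<integral>\<omega>. (norm (x \<omega> - xstar))\<^sup>2 \<partial>M)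
      + (2 * \<alpha> / c + 2 * \<alpha>\<^sup>2) * (card J * L\<^sup>2 / (real p)\<^sup>2) * (card J * (\<alpha>\<^sup>2 * B\<^sup>2))"
proof -
  define K where "K = (2 * \<alpha> / c + 2 * \<alpha>\<^sup>2) * (card J * L\<^sup>2 / (real p)\<^sup>2)"
  have K_nonneg: "0 \<le> K"
    using alpha_pos c_pos by (simp add: K_def)
  have pointwise: "(norm (drift \<omega>))\<^sup>2
      \<le> (1 - \<alpha> * c / 4) * (norm (x \<omega> - xstar))\<^sup>2 + K * (\<Sum>i\<in>J. (norm (x \<omega> - v i \<omega>))\<^sup>2)" for \<omega>
    unfolding drift_def K_def
    using strong[of "x \<omega>" xstar] card_ge
    by (intro parallel_gradient_step_le[OF c_pos alpha_pos step_size_le lip cocoercive _ p_pos card_le])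
      (auto simp: gradf_xstar)
  have integrable: "integrable M (\<lambda>\<omega>. (1 - \<alpha> * c / 4) * (norm (x \<omega> - xstar))\<^sup>2
      + K * (\<Sum>i\<in>J. (norm (x \<omega> - v i \<omega>))\<^sup>2))"
    using dist square_integrable_lag by (auto simp: square_integrable_def)
  have [measurable]: "drift \<in> borel_measurable M"
    by (rule measurable_from_subalg[OF subalg drift_measurable])
  show "square_integrable M drift"
    by (rule square_integrable_bound[OF integrable _ pointwise]) simp
  then have "(\<integral>\<omega>. (norm (drift \<omega>))\<^sup>2 \<partial>M)
      \<le> (\<integral>\<omega>. (1 - \<alpha> * c / 4) * (norm (x \<omega> - xstar))\<^sup>2 + K * (\<Sum>i\<in>J. (norm (x \<omega> - v i \<omega>))\<^sup>2) \<partial>M)"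
    using integrable pointwise by (intro integral_mono) (auto simp: square_integrable_def)
  also have "\<dots> = (1 - \<alpha> * c / 4) * (\<integral>\<omega>. (norm (x \<omega> - xstar))\<^sup>2 \<partial>M)
      + K * (\<Sum>i\<in>J. \<integral>\<omega>. (norm (x \<omega> - v i \<omega>))\<^sup>2 \<partial>M)"
    using dist square_integrable_lag by (simp add: square_integrable_def Bochner_Integration.integral_sum)
  also have "\<dots> \<le> (1 - \<alpha> * c / 4) * (\<integral>\<omega>. (norm (x \<omega> - xstar))\<^sup>2 \<partial>M) + K * (card J * (\<alpha>\<^sup>2 * B\<^sup>2))"
    using sum_mono[of J "\<lambda>i. \<integral>\<omega>. (norm (x \<omega> - v i \<omega>))\<^sup>2 \<partial>M" "\<lambda>_. \<alpha>\<^sup>2 * B\<^sup>2"] integral_lag_le K_nonneg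
    by (intro add_left_mono mult_left_mono) auto
  finally show "(\<integral>\<omega>. (norm (drift \<omega>))\<^sup>2 \<partial>M) \<le> (1 - \<alpha> * c / 4) * (\<integral>\<omega>. (norm (x \<omega> - xstar))\<^sup>2 \<partial>M)
      + (2 * \<alpha> / c + 2 * \<alpha>\<^sup>2) * (card J * L\<^sup>2 / (real p)\<^sup>2) * (card J * (\<alpha>\<^sup>2 * B\<^sup>2))"
    by (simp add: K_def)
qed

lemma integral_drift_noise_eq_zero: "i \<in> J \<Longrightarrow> (\<integral>\<omega>. drift \<omega> \<bullet> noise i \<omega> \<partial>M) = 0"
  unfolding noise_def
  using v_meas G_unbiased square_integrable_G square_integrable_gradf_v
  by (intro integral_inner_sub_cond_exp_eq_zero drift_measurable drift_bound(1)) auto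

lemma integral_noise_orthogonal:
  "i \<in> J \<Longrightarrow> j \<in> J \<Longrightarrow> i \<noteq> j \<Longrightarrow> (\<integral>\<omega>. noise i \<omega> \<bullet> noise j \<omega> \<partial>M) = 0"
  unfolding noise_def
  using v_meas G_int G_unbiased square_integrable_G square_integrable_gradf_v
  by (intro cond_indep_vars_integral_inner_centered_eq_zero[OF G_indep, where m = "\<lambda>k \<omega>. gradf (v k \<omega>)"])
    auto

lemma integral_next_iterate_le:
  shows "square_integrable M (\<lambda>\<omega>. x \<omega> - (\<alpha> / real p) *\<^sub>R (\<Sum>i\<in>J. G i \<omega>) - xstar)"
    and "(\<integral>\<omega>. (norm (x \<omega> - (\<alpha> / real p) *\<^sub>R (\<Sum>i\<in>J. G i \<omega>) - xstar))\<^sup>2 \<partial>M)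
      \<le> (1 - \<alpha> * c / 4) * (\<integral>\<omega>. (norm (x \<omega> - xstar))\<^sup>2 \<partial>M)
        + (2 * \<alpha>^3 * L\<^sup>2 * B\<^sup>2 / c + 2 * \<alpha>\<^sup>2 * \<sigma>\<^sup>2 / real p + 4 * L\<^sup>2 * \<alpha>^4 * B\<^sup>2)"
proof -
  have J: "finite J"
    using card_ge p_pos card.infinite by force
  note pythagoras = integral_norm_sq_sub_orthogonal_sum[OF J drift_bound(1) square_integrable_noise
      integral_drift_noise_eq_zero integral_noise_orthogonal, where a = "\<alpha> / real p"]
  show "square_integrable M (\<lambda>\<omega>. x \<omega> - (\<alpha> / real p) *\<^sub>R (\<Sum>i\<in>J. G i \<omega>) - xstar)"
    using pythagoras(1) by (simp add: next_iterate_eq)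
  have "(\<Sum>i\<in>J. \<integral>\<omega>. (norm (noise i \<omega>))\<^sup>2 \<partial>M) \<le> card J * \<sigma>\<^sup>2"
    using sum_mono[of J _ "\<lambda>_. \<sigma>\<^sup>2"] integral_noise_le by simp
  then have "(\<integral>\<omega>. (norm (x \<omega> - (\<alpha> / real p) *\<^sub>R (\<Sum>i\<in>J. G i \<omega>) - xstar))\<^sup>2 \<partial>M)
      \<le> (\<integral>\<omega>. (norm (drift \<omega>))\<^sup>2 \<partial>M) + (\<alpha> / real p)\<^sup>2 * (card J * \<sigma>\<^sup>2)"
    using pythagoras(2) by (simp add: next_iterate_eq mult_left_mono)
  then show "(\<integral>\<omega>. (norm (x \<omega> - (\<alpha> / real p) *\<^sub>R (\<Sum>i\<in>J. G i \<omega>) - xstar))\<^sup>2 \<partial>M)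
      \<le> (1 - \<alpha> * c / 4) * (\<integral>\<omega>. (norm (x \<omega> - xstar))\<^sup>2 \<partial>M)
        + (2 * \<alpha>^3 * L\<^sup>2 * B\<^sup>2 / c + 2 * \<alpha>\<^sup>2 * \<sigma>\<^sup>2 / real p + 4 * L\<^sup>2 * \<alpha>^4 * B\<^sup>2)"
    using drift_bound(2) error_terms_le by linarith
qed

end

theorem expected_sq_dist_step_le:
  "(\<integral>\<^sup>+\<omega>. ennreal ((norm (x \<omega> - (\<alpha> / real p) *\<^sub>R (\<Sum>i\<in>J. G i \<omega>) - xstar))\<^sup>2) \<partial>M)
    \<le> ennreal (1 - \<alpha> * c / 4) * (\<integral>\<^sup>+\<omega>. ennreal ((norm (x \<omega> - xstar))\<^sup>2) \<partial>M)
      + ennreal (2 * \<alpha>^3 * L\<^sup>2 * B\<^sup>2 / c + 2 * \<alpha>\<^sup>2 * \<sigma>\<^sup>2 / real p + 4 * L\<^sup>2 * \<alpha>^4 * B\<^sup>2)"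
    (is "?next \<le> ennreal ?\<rho> * ?dist + ennreal ?C")
proof (cases "square_integrable M (\<lambda>\<omega>. x \<omega> - xstar)")
  case True
  have "0 \<le> (\<integral>\<omega>. (norm (x \<omega> - xstar))\<^sup>2 \<partial>M)" "0 \<le> ?C"
    using alpha_pos c_pos by simp_all
  then show ?thesis
    using integral_next_iterate_le[OF True] contraction_factor_pos
    by (simp add: nn_integral_norm_sq_eq_integral True ennreal_mult[symmetric] ennreal_plus[symmetric]
        del: ennreal_plus)
next
  case False
  moreover have "(\<lambda>\<omega>. x \<omega> - xstar) \<in> borel_measurable M"
    by measurable
  ultimately have "\<not> ?dist < \<infinity>"
    using square_integrableI_nn_integral by blast
  then have "?dist = \<infinity>"
    by (simp add: less_top[symmetric])
  with contraction_factor_pos show ?thesis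
    by (simp add: ennreal_top_mult_left)
qed

end

theorem mainTheorem7:
  fixes M :: "'a measure"
    and F :: "nat \<Rightarrow> 'a measure"
    and f :: "'v::euclidean_space \<Rightarrow> real"
    and gradf :: "'v \<Rightarrow> 'v"
    and xstar :: 'v
    and L c \<alpha> \<sigma> B :: real
    and p :: nat
    and I :: "nat \<Rightarrow> nat set"
    and x :: "nat \<Rightarrow> 'a \<Rightarrow> 'v"
    and v :: "nat \<Rightarrow> nat \<Rightarrow> 'a \<Rightarrow> 'v"
    and G :: "nat \<Rightarrow> nat \<Rightarrow> 'a \<Rightarrow> 'v"
    and x0 :: 'v
  assumes prob: "prob_space M"
    and filt: "filtration (space M) F"
    and sub: "\<And>t. subalgebra M (F t)"
    \<comment> \<open>f differentiable with gradient gradf, L-Lipschitz gradient, c-strongly convex, minimizer xstar\<close>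
    and grad: "\<And>y. GDERIV f y :> gradf y"
    and lip: "L-lipschitz_on UNIV gradf"
    and c_pos: "c > 0"
    and strong: "\<And>y z. (y - z) \<bullet> (gradf y - gradf z) \<ge> c * (norm (y - z))\<^sup>2"
    and minimizer: "\<And>y. f xstar \<le> f y"
    \<comment> \<open>parameters\<close>
    and p_pos: "p > 0"
    and alpha_pos: "\<alpha> > 0"
    and alpha_le: "\<alpha> \<le> 1 / (4 * L)"
    and B_pos: "B > 0"
    \<comment> \<open>active processor sets\<close>
    and I_sub: "\<And>t. I t \<subseteq> {1..p}"
    and I_card: "\<And>t. real p / 2 \<le> real (card (I t))"
    \<comment> \<open>iterates, views and stochastic gradients\<close>
    and x_init: "x 0 = (\<lambda>\<omega>. x0)"
    and x_meas: "\<And>t. x t \<in> borel_measurable (F t)"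
    and v_meas: "\<And>t i. i \<in> I t \<Longrightarrow> v t i \<in> borel_measurable (F t)"
    and G_meas: "\<And>t i. i \<in> I t \<Longrightarrow> G t i \<in> borel_measurable (F (Suc t))"
    and G_int: "\<And>t i. i \<in> I t \<Longrightarrow> integrable M (G t i)"
    and G_indep: "\<And>t. cond_indep_vars M (F t) (G t) (I t)"
    and G_unbiased: "\<And>t i b. i \<in> I t \<Longrightarrow> b \<in> Basis \<Longrightarrow>
        AE \<omega> in M. real_cond_exp M (F t) (\<lambda>\<omega>'. G t i \<omega>' \<bullet> b) \<omega> = gradf (v t i \<omega>) \<bullet> b"
    and G_var: "\<And>t i. i \<in> I t \<Longrightarrow>
        AE \<omega> in M. nn_cond_exp M (F t) (\<lambda>\<omega>'. ennreal ((norm (G t i \<omega>' - gradf (v t i \<omega>')))\<^sup>2)) \<omega>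
                    \<le> ennreal (\<sigma>\<^sup>2)"
    and update: "\<And>t \<omega>. x (Suc t) \<omega> = x t \<omega> - (\<alpha> / real p) *\<^sub>R (\<Sum>i\<in>I t. G t i \<omega>)"
    \<comment> \<open>elastic consistency\<close>
    and elastic: "\<And>t i. i \<in> I t \<Longrightarrow>
        (\<integral>\<^sup>+ \<omega>. ennreal ((norm (x t \<omega> - v t i \<omega>))\<^sup>2) \<partial>M) \<le> ennreal (\<alpha>\<^sup>2 * B\<^sup>2)"
  shows "\<And>t. (\<integral>\<^sup>+ \<omega>. ennreal ((norm (x (Suc t) \<omega> - xstar))\<^sup>2) \<partial>M)
           \<le> ennreal (1 - \<alpha> * c / 4) * (\<integral>\<^sup>+ \<omega>. ennreal ((norm (x t \<omega> - xstar))\<^sup>2) \<partial>M)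
              + ennreal (2 * \<alpha>^3 * L\<^sup>2 * B\<^sup>2 / c + 2 * \<alpha>\<^sup>2 * \<sigma>\<^sup>2 / real p
                         + 4 * L\<^sup>2 * \<alpha>^4 * B\<^sup>2)"
proof -
  fix t
  have card_le: "card (I t) \<le> p"
    using card_mono[OF _ I_sub[of t]] by simp
  have G_measurable: "G t i \<in> borel_measurable M" if "i \<in> I t" for i
    using measurable_from_subalg[OF sub G_meas[OF that]] .
  interpret parallel_sgd_step M "F t" f gradf xstar L c \<alpha> \<sigma> B p "I t" "x t" "v t" "G t"
    by (intro parallel_sgd_step.intro parallel_sgd_step_axioms.intro prob)
      (fact sub grad lip c_pos strong minimizer p_pos alpha_pos alpha_le card_le I_card x_meas v_meas
        G_measurable G_int G_indep G_unbiased G_var elastic)+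
  show "(\<integral>\<^sup>+ \<omega>. ennreal ((norm (x (Suc t) \<omega> - xstar))\<^sup>2) \<partial>M)
           \<le> ennreal (1 - \<alpha> * c / 4) * (\<integral>\<^sup>+ \<omega>. ennreal ((norm (x t \<omega> - xstar))\<^sup>2) \<partial>M)
              + ennreal (2 * \<alpha>^3 * L\<^sup>2 * B\<^sup>2 / c + 2 * \<alpha>\<^sup>2 * \<sigma>\<^sup>2 / real p
                         + 4 * L\<^sup>2 * \<alpha>^4 * B\<^sup>2)"
    using expected_sq_dist_step_le by (simp add: update)
qed

end
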